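(* Let $Y$ be a set. The Lie subring of $A[Y]$ (with bracket $[a,b]=ab-ba$) generated by $Y$ identifies with $R\mathfrak L[Y]$; that is, the Lie ring morphism $R\mathfrak L[Y]\to A[Y]$ sending each $y\in Y$ to $y$ is injective.
   Context: For $s\geq2$, $\Delta_s(Y)=\{(y_1,\dots,y_s)\in Y^s: y_i=y_j\text{ for some }i\neq j\}$. The reduced free algebra $A[Y]$ is the unital associative ring generated by $Y$ subject to $y_1\cdots y_s=0$ for all $s$ and all $(y_i)\in\Delta_s(Y)$. The reduced free Lie ring $R\mathfrak L[Y]$ is the Lie ring (Lie algebra over $\mathbb Z$) generated by $Y$ subject to $[y_1,[y_2,[\cdots[y_{s-1},y_s]\cdots]]]=0$ for all $s$ and all $(y_i)\in\Delta_s(Y)$. *)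

theory Defs
  imports Main
begin

datatype 'a rterm = RVar 'a | RZero | ROne | RAdd "'a rterm" "'a rterm"
  | RNeg "'a rterm" | RMul "'a rterm" "'a rterm"

datatype 'a lterm = LVar 'a | LZero | LAdd "'a lterm" "'a lterm"
  | LNeg "'a lterm" | LBr "'a lterm" "'a lterm"

fun rvars :: "'a rterm \<Rightarrow> 'a set" where
  "rvars (RVar y) = {y}"
| "rvars RZero = {}"
| "rvars ROne = {}"
| "rvars (RAdd a b) = rvars a \<union> rvars b"
| "rvars (RNeg a) = rvars a"
| "rvars (RMul a b) = rvars a \<union> rvars b"

fun lvars :: "'a lterm \<Rightarrow> 'a set" where
  "lvars (LVar y) = {y}"
| "lvars LZero = {}"
| "lvars (LAdd a b) = lvars a \<union> lvars b"
| "lvars (LNeg a) = lvars a"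
| "lvars (LBr a b) = lvars a \<union> lvars b"

definition Delta :: "nat \<Rightarrow> 'a set \<Rightarrow> 'a list set" where
  "Delta s Y = {ys. length ys = s \<and> set ys \<subseteq> Y \<and>
     (\<exists>i j. i < s \<and> j < s \<and> i \<noteq> j \<and> ys ! i = ys ! j)}"

fun rprod :: "'a list \<Rightarrow> 'a rterm" where
  "rprod [] = ROne"
| "rprod (y # ys) = RMul (RVar y) (rprod ys)"

fun lbr_list :: "'a list \<Rightarrow> 'a lterm" where
  "lbr_list [] = LZero"
| "lbr_list [y] = LVar y"
| "lbr_list (y # ys) = LBr (LVar y) (lbr_list ys)"

text \<open>Equality in A[Y]: the least congruence on ring terms containing the unital
  ring axioms and the relations y_1...y_s = 0 for (y_i) in Delta_s(Y), s >= 2.\<close>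
inductive ring_eq :: "'a set \<Rightarrow> 'a rterm \<Rightarrow> 'a rterm \<Rightarrow> bool" for Y where
  r_refl: "ring_eq Y a a"
| r_sym: "ring_eq Y a b \<Longrightarrow> ring_eq Y b a"
| r_trans: "ring_eq Y a b \<Longrightarrow> ring_eq Y b c \<Longrightarrow> ring_eq Y a c"
| r_add_cong: "ring_eq Y a a' \<Longrightarrow> ring_eq Y b b' \<Longrightarrow> ring_eq Y (RAdd a b) (RAdd a' b')"
| r_neg_cong: "ring_eq Y a a' \<Longrightarrow> ring_eq Y (RNeg a) (RNeg a')"
| r_mul_cong: "ring_eq Y a a' \<Longrightarrow> ring_eq Y b b' \<Longrightarrow> ring_eq Y (RMul a b) (RMul a' b')"
| r_add_assoc: "ring_eq Y (RAdd (RAdd a b) c) (RAdd a (RAdd b c))"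
| r_add_comm: "ring_eq Y (RAdd a b) (RAdd b a)"
| r_add_zero: "ring_eq Y (RAdd a RZero) a"
| r_add_neg: "ring_eq Y (RAdd a (RNeg a)) RZero"
| r_mul_assoc: "ring_eq Y (RMul (RMul a b) c) (RMul a (RMul b c))"
| r_mul_one_l: "ring_eq Y (RMul ROne a) a"
| r_mul_one_r: "ring_eq Y (RMul a ROne) a"
| r_distl: "ring_eq Y (RMul a (RAdd b c)) (RAdd (RMul a b) (RMul a c))"
| r_distr: "ring_eq Y (RMul (RAdd a b) c) (RAdd (RMul a c) (RMul b c))"
| r_rel: "2 \<le> s \<Longrightarrow> ys \<in> Delta s Y \<Longrightarrow> ring_eq Y (rprod ys) RZero"

text \<open>Equality in the reduced free Lie ring RL[Y]: the least congruence on Lie terms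
  containing the Lie ring axioms and the relations [y_1,[y_2,[...,y_s]]] = 0
  for (y_i) in Delta_s(Y), s >= 2.\<close>
inductive lie_eq :: "'a set \<Rightarrow> 'a lterm \<Rightarrow> 'a lterm \<Rightarrow> bool" for Y where
  l_refl: "lie_eq Y a a"
| l_sym: "lie_eq Y a b \<Longrightarrow> lie_eq Y b a"
| l_trans: "lie_eq Y a b \<Longrightarrow> lie_eq Y b c \<Longrightarrow> lie_eq Y a c"
| l_add_cong: "lie_eq Y a a' \<Longrightarrow> lie_eq Y b b' \<Longrightarrow> lie_eq Y (LAdd a b) (LAdd a' b')"
| l_neg_cong: "lie_eq Y a a' \<Longrightarrow> lie_eq Y (LNeg a) (LNeg a')"
| l_br_cong: "lie_eq Y a a' \<Longrightarrow> lie_eq Y b b' \<Longrightarrow> lie_eq Y (LBr a b) (LBr a' b')"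
| l_add_assoc: "lie_eq Y (LAdd (LAdd a b) c) (LAdd a (LAdd b c))"
| l_add_comm: "lie_eq Y (LAdd a b) (LAdd b a)"
| l_add_zero: "lie_eq Y (LAdd a LZero) a"
| l_add_neg: "lie_eq Y (LAdd a (LNeg a)) LZero"
| l_br_addl: "lie_eq Y (LBr (LAdd a b) c) (LAdd (LBr a c) (LBr b c))"
| l_br_addr: "lie_eq Y (LBr a (LAdd b c)) (LAdd (LBr a b) (LBr a c))"
| l_alt: "lie_eq Y (LBr a a) LZero"
| l_jacobi: "lie_eq Y (LAdd (LBr a (LBr b c)) (LAdd (LBr b (LBr c a)) (LBr c (LBr a b)))) LZero"
| l_rel: "2 \<le> s \<Longrightarrow> ys \<in> Delta s Y \<Longrightarrow> lie_eq Y (lbr_list ys) LZero"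

fun lie_to_ring :: "'a lterm \<Rightarrow> 'a rterm" where
  "lie_to_ring (LVar y) = RVar y"
| "lie_to_ring LZero = RZero"
| "lie_to_ring (LAdd a b) = RAdd (lie_to_ring a) (lie_to_ring b)"
| "lie_to_ring (LNeg a) = RNeg (lie_to_ring a)"
| "lie_to_ring (LBr a b) =
     RAdd (RMul (lie_to_ring a) (lie_to_ring b)) (RNeg (RMul (lie_to_ring b) (lie_to_ring a)))"

end

theory Submission
  imports Defs "HOL-Library.Function_Algebras" "HOL-Library.Multiset"
begin

text \<open>
  The reduced free algebra acts on integer-valued functions on words: a generator y sends g to
  the function whose value at a word w without repeated letters is g w' if w = y w', and which
  vanishes elsewhere. Monomials with a repeated letter act as zero, so the relations of A[Y]
  hold for every Y, and Lie terms with equal images in A[Y] take equal values on the indicator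
  of the empty word.

  In the reduced free Lie ring on all letters, the Jacobi identity rewrites every right-normed
  bracket on distinct letters as a signed sum of right-normed brackets on the same letters
  ending in a pivot letter chosen from the support, and every bracket of two right-normed
  brackets as a signed sum of right-normed ones; so every element is a signed sum of such
  normal brackets. On the indicator of the empty word a normal bracket [x] takes the value 1 at
  x and 0 at every other normal word. Hence the action is faithful on the free Lie ring on all
  letters, and the relations over a subset Y follow by sending the letters outside Y to 0.
\<close>

section \<open>The action of ring terms on functions on words\<close>

fun ring_act :: "'a rterm \<Rightarrow> ('a list \<Rightarrow> int) \<Rightarrow> 'a list \<Rightarrow> int" where
  "ring_act (RVar y) g = (\<lambda>w. if distinct w \<and> w \<noteq> [] \<and> hd w = y then g (tl w) else 0)"
| "ring_act RZero g = 0"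
| "ring_act ROne g = g"
| "ring_act (RAdd a b) g = ring_act a g + ring_act b g"
| "ring_act (RNeg a) g = - ring_act a g"
| "ring_act (RMul a b) g = ring_act a (ring_act b g)"

lemma ring_act_add [simp]: "ring_act r (f + g) = ring_act r f + ring_act r g"
proof (induction r arbitrary: f g)
  case (RVar y) then show ?case by (auto simp: fun_eq_iff)
qed (simp_all add: algebra_simps)

lemma ring_act_uminus [simp]: "ring_act r (- f) = - ring_act r f"
proof (induction r arbitrary: f)
  case (RVar y) then show ?case by (auto simp: fun_eq_iff)
qed simp_all

lemma ring_act_zero [simp]: "ring_act r 0 = 0"
proof (induction r)
  case (RVar y) then show ?case by (auto simp: fun_eq_iff)
qed simp_all

lemma ring_act_diff [simp]: "ring_act r (f - g) = ring_act r f - ring_act r g"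
  using ring_act_add[of r f "- g"] by simp

lemma ring_act_sum_list:
  "ring_act r (sum_list (map f xs)) = sum_list (map (\<lambda>x. ring_act r (f x)) xs)"
  by (induction xs) (simp_all only: list.map sum_list_simps ring_act_add ring_act_zero)

lemma ring_act_rprod_append:
  "ring_act (rprod (x @ y)) g = ring_act (rprod x) (ring_act (rprod y) g)"
  by (induction x) simp_all

lemma ring_act_rprod_Cons_apply:
  "ring_act (rprod (a # x)) g w =
    (if distinct w \<and> take (length (a # x)) w = a # x then g (drop (length (a # x)) w) else 0)"
proof (induction x arbitrary: a w)
  case Nil then show ?case by (cases w) auto
next
  case (Cons b x) then show ?case by (cases w) auto
qed

lemma ring_act_rprod_not_distinct:
  assumes "\<not> distinct x" shows "ring_act (rprod x) g = 0"
proof (cases x)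
  case (Cons a x')
  then show ?thesis using assms
    by (auto simp: fun_eq_iff ring_act_rprod_Cons_apply simp del: rprod.simps)
      (metis distinct.simps(2) distinct_take)+
qed (use assms in simp)

definition delta_Nil :: "'a list \<Rightarrow> int" where
  "delta_Nil w = (if w = [] then 1 else 0)"

lemma ring_act_rprod_delta_Nil:
  "ring_act (rprod y) delta_Nil u = (if distinct u \<and> u = y then 1 else 0)"
proof (cases y)
  case Nil then show ?thesis by (auto simp: delta_Nil_def)
next
  case (Cons a y')
  have "(take (length y) u = y \<and> drop (length y) u = []) \<longleftrightarrow> u = y"
    by (metis append_Nil2 append_eq_conv_conj)
  then show ?thesis using Cons
    by (auto simp: ring_act_rprod_Cons_apply delta_Nil_def simp del: rprod.simps)
qed

lemma Delta_not_distinct: "ys \<in> Delta s Y \<Longrightarrow> \<not> distinct ys"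
  by (auto simp: Delta_def distinct_conv_nth)

lemma ring_eq_imp_ring_act_eq: "ring_eq Y a b \<Longrightarrow> ring_act a = ring_act b"
proof (induction rule: ring_eq.induct)
  case (r_rel s ys)
  then show ?case by (auto simp: fun_eq_iff ring_act_rprod_not_distinct Delta_not_distinct)
next
  case (r_mul_cong a a' b b') then show ?case by (intro ext) simp
qed (simp_all add: fun_eq_iff algebra_simps)

definition signed :: "bool \<Rightarrow> 'b::ab_group_add \<Rightarrow> 'b" where
  "signed s x = (if s then x else - x)"

lemma signed_simps [simp]:
  "signed True x = x" "signed False x = - x" "signed (\<not> s) x = - signed s x" "signed s 0 = 0"
  by (auto simp: signed_def)

lemma signed_apply: "signed s f u = signed s (f u)"
  by (simp add: signed_def)

lemma ring_act_signed [simp]: "ring_act r (signed s f) = signed s (ring_act r f)"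
  by (simp add: signed_def)

lemma sum_list_map_eq_zero:
  "(\<And>x. x \<in> set xs \<Longrightarrow> f x = 0) \<Longrightarrow> sum_list (map f xs) = (0::'b::monoid_add)"
  by (induction xs) auto

lemma sum_list_fun_apply:
  "sum_list (map f xs) u = sum_list (map (\<lambda>x. f x u) xs :: 'b::monoid_add list)"
  by (induction xs) simp_all

text \<open>[a,[b,v]] = a [b,v] - [b,v] a, with the sign of a word recorded by the boolean.\<close>

fun bracket_expansion :: "'a list \<Rightarrow> (bool \<times> 'a list) list" where
  "bracket_expansion [] = []"
| "bracket_expansion [a] = [(True, [a])]"
| "bracket_expansion (a # b # v) =
     map (\<lambda>(s, y). (s, a # y)) (bracket_expansion (b # v))
     @ map (\<lambda>(s, y). (\<not> s, y @ [a])) (bracket_expansion (b # v))"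

lemma mset_bracket_expansion: "(s, y) \<in> set (bracket_expansion v) \<Longrightarrow> mset y = mset v"
proof -
  have "\<forall>(s, y) \<in> set (bracket_expansion v). mset y = mset v"
    by (induction v rule: bracket_expansion.induct) (auto simp: add.commute)
  then show "(s, y) \<in> set (bracket_expansion v) \<Longrightarrow> mset y = mset v" by fastforce
qed

lemma bracket_expansion_head:
  assumes "distinct x" "x \<noteq> []"
  obtains rest where "bracket_expansion x = (True, x) # rest"
    and "\<forall>(s, y) \<in> set rest. last y \<noteq> last x"
  using assms
proof (induction x arbitrary: thesis rule: bracket_expansion.induct)
  case (3 a b v)
  obtain R where R: "bracket_expansion (b # v) = (True, b # v) # R"
    and R_last: "\<forall>(s, y) \<in> set R. last y \<noteq> last (b # v)"
    using "3.IH" "3.prems"(2) by auto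
  have a_not_last: "last (b # v) \<noteq> a"
    using "3.prems"(2) last_in_set[of "b # v"] by auto
  have nonempty: "y \<noteq> []" if "(s, y) \<in> set R" for s y
    using that R mset_bracket_expansion[of s y "b # v"] by auto
  show ?case
  proof (rule "3.prems"(1))
    show "bracket_expansion (a # b # v) = (True, a # b # v) #
      (map (\<lambda>(s, y). (s, a # y)) R @ map (\<lambda>(s, y). (\<not> s, y @ [a])) (bracket_expansion (b # v)))"
      by (simp add: R)
    show "\<forall>(s, y) \<in> set (map (\<lambda>(s, y). (s, a # y)) R
        @ map (\<lambda>(s, y). (\<not> s, y @ [a])) (bracket_expansion (b # v))). last y \<noteq> last (a # b # v)"
      using R_last nonempty a_not_last by fastforce
  qed
qed auto

lemma ring_act_lbr_list:
  "ring_act (lie_to_ring (lbr_list v)) g =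
     sum_list (map (\<lambda>(s, y). signed s (ring_act (rprod y) g)) (bracket_expansion v))"
proof (induction v arbitrary: g rule: lbr_list.induct)
  case (3 a b v)
  show ?case
    by (simp add: 3 ring_act_sum_list o_def case_prod_beta ring_act_rprod_append
        uminus_sum_list_map)
qed simp_all

lemma ring_act_lbr_list_not_distinct:
  assumes "\<not> distinct v" shows "ring_act (lie_to_ring (lbr_list v)) g = 0"
proof -
  have "ring_act (rprod y) g = 0" if "(s, y) \<in> set (bracket_expansion v)" for s y
    using mset_bracket_expansion[OF that] assms
    by (metis mset_eq_imp_distinct_iff ring_act_rprod_not_distinct)
  then show ?thesis by (auto simp: ring_act_lbr_list intro!: sum_list_map_eq_zero)
qed

lemma lie_eq_imp_ring_act_eq:
  "lie_eq Y a b \<Longrightarrow> ring_act (lie_to_ring a) = ring_act (lie_to_ring b)"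
proof (induction rule: lie_eq.induct)
  case (l_add_cong a a' b b') then show ?case by (intro ext) simp
next
  case (l_br_cong a a' b b') then show ?case by (intro ext) simp
next
  case (l_rel s ys)
  then show ?case by (intro ext) (simp add: ring_act_lbr_list_not_distinct Delta_not_distinct)
qed (simp_all add: fun_eq_iff algebra_simps)

section \<open>The reduced free Lie ring on all letters\<close>

quotient_type 'a RL = "'a lterm" / "lie_eq UNIV"
  by (auto intro!: equivpI reflpI sympI transpI intro: l_refl l_sym l_trans)

instantiation RL :: (type) ab_group_add
begin
lift_definition zero_RL :: "'a RL" is LZero .
lift_definition plus_RL :: "'a RL \<Rightarrow> 'a RL \<Rightarrow> 'a RL" is LAdd by (rule l_add_cong)
lift_definition uminus_RL :: "'a RL \<Rightarrow> 'a RL" is LNeg by (rule l_neg_cong)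
lift_definition minus_RL :: "'a RL \<Rightarrow> 'a RL \<Rightarrow> 'a RL" is "\<lambda>a b. LAdd a (LNeg b)"
  by (intro l_add_cong l_neg_cong)
instance
proof
  fix a b c :: "'a RL"
  show "a + b + c = a + (b + c)" by transfer (rule l_add_assoc)
  show "a + b = b + a" by transfer (rule l_add_comm)
  show "0 + a = a" by transfer (metis l_add_comm l_add_zero l_trans)
  show "- a + a = 0" by transfer (metis l_add_comm l_add_neg l_trans)
  show "a - b = a + - b" by transfer (rule l_refl)
qed
end

lift_definition lie_br :: "'a RL \<Rightarrow> 'a RL \<Rightarrow> 'a RL" is LBr by (rule l_br_cong)
lift_definition lie_gen :: "'a \<Rightarrow> 'a RL" is LVar .
lift_definition right_normed :: "'a list \<Rightarrow> 'a RL" is lbr_list .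
lift_definition lie_eval :: "'a RL \<Rightarrow> 'a list \<Rightarrow> int"
  is "\<lambda>c. ring_act (lie_to_ring c) delta_Nil"
  using lie_eq_imp_ring_act_eq by metis

lemma lie_br_add_left: "lie_br (x + y) z = lie_br x z + lie_br y z"
  by transfer (rule l_br_addl)

lemma lie_br_add_right: "lie_br x (y + z) = lie_br x y + lie_br x z"
  by transfer (rule l_br_addr)

lemma lie_br_self: "lie_br x x = 0"
  by transfer (rule l_alt)

lemma lie_br_jacobi: "lie_br a (lie_br b c) + (lie_br b (lie_br c a) + lie_br c (lie_br a b)) = 0"
  by transfer (rule l_jacobi)

lemma lie_br_zero_left [simp]: "lie_br 0 x = 0"
  using lie_br_add_left[of 0 0 x] by simp

lemma lie_br_zero_right [simp]: "lie_br x 0 = 0"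
  using lie_br_add_right[of x 0 0] by simp

lemma lie_br_uminus_left: "lie_br (- x) y = - lie_br x y"
  using lie_br_add_left[of "- x" x y] by (simp add: eq_neg_iff_add_eq_0)

lemma lie_br_uminus_right: "lie_br x (- y) = - lie_br x y"
  using lie_br_add_right[of x "- y" y] by (simp add: eq_neg_iff_add_eq_0)

lemma lie_br_anticomm: "lie_br x y = - lie_br y x"
proof -
  have "lie_br (x + y) (x + y) = (lie_br x x + lie_br x y) + (lie_br y x + lie_br y y)"
    by (simp only: lie_br_add_left lie_br_add_right ac_simps)
  then have "lie_br x y + lie_br y x = 0" by (simp add: lie_br_self)
  then show ?thesis by (simp add: eq_neg_iff_add_eq_0)
qed

lemma lie_br_signed_left: "lie_br (signed s x) y = signed s (lie_br x y)"
  by (simp add: signed_def lie_br_uminus_left)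

lemma lie_br_signed_right: "lie_br x (signed s y) = signed s (lie_br x y)"
  by (simp add: signed_def lie_br_uminus_right)

lemma lie_br_sum_list_right:
  "lie_br x (sum_list (map f xs)) = sum_list (map (\<lambda>a. lie_br x (f a)) xs)"
  by (induction xs) (simp_all add: lie_br_add_right)

lemma lie_br_br_left: "lie_br (lie_br a r) x = lie_br a (lie_br r x) - lie_br r (lie_br a x)"
proof -
  have "lie_br a (lie_br r x) + (lie_br r (lie_br x a) + lie_br x (lie_br a r)) = 0"
    by (rule lie_br_jacobi)
  moreover have "lie_br x (lie_br a r) = - lie_br (lie_br a r) x"
    by (rule lie_br_anticomm)
  moreover have "lie_br r (lie_br x a) = - lie_br r (lie_br a x)"
    by (metis lie_br_anticomm lie_br_uminus_right)
  ultimately show ?thesis by (simp add: algebra_simps eq_neg_iff_add_eq_0)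
qed

lemma right_normed_Nil [simp]: "right_normed [] = 0"
  by transfer (simp add: l_refl)

lemma right_normed_single [simp]: "right_normed [a] = lie_gen a"
  by transfer (simp add: l_refl)

lemma right_normed_Cons:
  "v \<noteq> [] \<Longrightarrow> right_normed (a # v) = lie_br (lie_gen a) (right_normed v)"
  by (cases v) (simp_all, transfer, simp add: l_refl)

lemma right_normed_not_distinct: "\<not> distinct w \<Longrightarrow> right_normed w = 0"
proof transfer
  fix w :: "'a list" assume "\<not> distinct w"
  moreover have "length w \<ge> 2" if "\<not> distinct w"
    using that by (cases w rule: remdups_adj.cases) auto
  ultimately show "lie_eq UNIV (lbr_list w) LZero"
    by (intro l_rel[of "length w"]) (auto simp: Delta_def distinct_conv_nth)
qed

lemma lie_eval_zero [simp]: "lie_eval 0 = 0"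
  by transfer simp

lemma lie_eval_add [simp]: "lie_eval (x + y) = lie_eval x + lie_eval y"
  by transfer simp

lemma lie_eval_uminus [simp]: "lie_eval (- x) = - lie_eval x"
  by transfer simp

lemma lie_eval_right_normed:
  "lie_eval (right_normed x) = ring_act (lie_to_ring (lbr_list x)) delta_Nil"
  by transfer simp

definition signed_sum :: "(bool \<times> 'a list) list \<Rightarrow> 'a RL" where
  "signed_sum L = sum_list (map (\<lambda>(s, w). signed s (right_normed w)) L)"

lemma signed_sum_Nil [simp]: "signed_sum [] = 0"
  by (simp add: signed_sum_def)

lemma signed_sum_Cons [simp]: "signed_sum ((s, w) # L) = signed s (right_normed w) + signed_sum L"
  by (simp add: signed_sum_def)

lemma signed_sum_append: "signed_sum (L @ M) = signed_sum L + signed_sum M"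
  by (simp add: signed_sum_def)

lemma signed_signed_sum: "signed s (signed_sum L) = signed_sum (map (\<lambda>(t, w). (s = t, w)) L)"
  by (induction L) (auto simp: signed_def)

definition ad_word :: "'a list \<Rightarrow> 'a RL \<Rightarrow> 'a RL" where
  "ad_word x X = foldr (\<lambda>y. lie_br (lie_gen y)) x X"

lemma ad_word_Nil [simp]: "ad_word [] X = X"
  by (simp add: ad_word_def)

lemma ad_word_Cons [simp]: "ad_word (a # x) X = lie_br (lie_gen a) (ad_word x X)"
  by (simp add: ad_word_def)

lemma ad_word_append: "ad_word (x @ y) X = ad_word x (ad_word y X)"
  by (simp add: ad_word_def)

lemma ad_word_right_normed: "w \<noteq> [] \<Longrightarrow> ad_word x (right_normed w) = right_normed (x @ w)"
  by (induction x) (simp_all add: right_normed_Cons)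

lemma ad_word_uminus: "ad_word x (- X) = - ad_word x X"
  by (induction x) (simp_all add: lie_br_uminus_right)

lemma ad_word_signed: "ad_word x (signed s X) = signed s (ad_word x X)"
  by (simp add: signed_def ad_word_uminus)

lemma ad_word_sum_list: "ad_word x (sum_list (map f xs)) = sum_list (map (\<lambda>a. ad_word x (f a)) xs)"
  by (induction x) (simp_all add: lie_br_sum_list_right o_def)

lemma lie_br_right_normed:
  "lie_br (right_normed v) X =
     sum_list (map (\<lambda>(s, y). signed s (ad_word y X)) (bracket_expansion v))"
proof (induction v arbitrary: X rule: lbr_list.induct)
  case (3 a b v)
  show ?case
    by (simp add: right_normed_Cons lie_br_br_left 3 lie_br_sum_list_right lie_br_signed_right
        o_def case_prod_beta ad_word_append uminus_sum_list_map)
qed simp_all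

lemma lie_br_right_normed_right_normed:
  "\<exists>M. lie_br (right_normed w) (right_normed x) = signed_sum M"
proof (cases "x = []")
  case False
  then have "lie_br (right_normed w) (right_normed x) =
      signed_sum (map (\<lambda>(s, y). (s, y @ x)) (bracket_expansion w))"
    by (simp add: lie_br_right_normed ad_word_right_normed signed_sum_def o_def split_def)
  then show ?thesis by blast
qed (auto intro: exI[of _ "[]"])

lemma lie_br_right_normed_signed_sum: "\<exists>M. lie_br (right_normed w) (signed_sum L) = signed_sum M"
proof (induction L)
  case Nil then show ?case by (auto intro: exI[of _ "[]"])
next
  case (Cons p L)
  obtain s x where p: "p = (s, x)" by fastforce
  obtain M1 where "lie_br (right_normed w) (right_normed x) = signed_sum M1"
    using lie_br_right_normed_right_normed by blast
  moreover obtain M2 where "lie_br (right_normed w) (signed_sum L) = signed_sum M2"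
    using Cons.IH by blast
  ultimately have "lie_br (right_normed w) (signed_sum (p # L)) =
      signed_sum (map (\<lambda>(t, y). (s = t, y)) M1 @ M2)"
    by (simp add: p lie_br_add_right lie_br_signed_right signed_signed_sum signed_sum_append)
  then show ?case by blast
qed

lemma lie_br_signed_sum: "\<exists>M. lie_br (signed_sum L) (signed_sum L') = signed_sum M"
proof (induction L)
  case Nil then show ?case by (auto intro: exI[of _ "[]"])
next
  case (Cons p L)
  obtain s x where p: "p = (s, x)" by fastforce
  obtain M1 where "lie_br (right_normed x) (signed_sum L') = signed_sum M1"
    using lie_br_right_normed_signed_sum by blast
  moreover obtain M2 where "lie_br (signed_sum L) (signed_sum L') = signed_sum M2"
    using Cons.IH by blast
  ultimately have "lie_br (signed_sum (p # L)) (signed_sum L') =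
      signed_sum (map (\<lambda>(t, y). (s = t, y)) M1 @ M2)"
    by (simp add: p lie_br_add_left lie_br_signed_left signed_signed_sum signed_sum_append)
  then show ?case by blast
qed

lemma ex_signed_sum: "\<exists>L. X = signed_sum L"
proof (induction X rule: RL.abs_induct)
  case (1 c)
  show ?case
  proof (induction c)
    case (LVar y)
    have "abs_RL (LVar y) = signed_sum [(True, [y])]" by (simp add: lie_gen.abs_eq)
    then show ?case by blast
  next
    case LZero
    have "abs_RL LZero = signed_sum []" by (simp add: zero_RL.abs_eq)
    then show ?case by blast
  next
    case (LAdd c1 c2)
    then show ?case by (metis plus_RL.abs_eq signed_sum_append)
  next
    case (LNeg c)
    then show ?case by (metis uminus_RL.abs_eq signed_signed_sum signed_simps(2))
  next
    case (LBr c1 c2)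
    then show ?case by (metis lie_br.abs_eq lie_br_signed_sum)
  qed
qed

text \<open>Any choice of pivot works, as long as it depends only on the support: distinct normal
  words with the same letters then end in the same letter.\<close>

definition pivot :: "'a set \<Rightarrow> 'a" where
  "pivot S = (SOME z. z \<in> S)"

definition normal_word :: "'a list \<Rightarrow> bool" where
  "normal_word x \<longleftrightarrow> distinct x \<and> x \<noteq> [] \<and> last x = pivot (set x)"

text \<open>Writing w = u z v, the bracket [w] is ad_u [z,[v]] = - ad_u [[v],z], and every word in
  the expansion of [[v],z] ends in z.\<close>

lemma right_normed_ending_in:
  assumes "z \<in> set w"
  obtains L where "right_normed w = signed_sum L"
    and "\<forall>(s, x) \<in> set L. mset x = mset w \<and> last x = z"
proof -
  obtain u v where w: "w = u @ z # v" using assms by (metis split_list)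
  show ?thesis
  proof (cases "v = []")
    case True
    then show ?thesis using w that[of "[(True, w)]"] by simp
  next
    case False
    define L where "L = map (\<lambda>(s, y). (\<not> s, u @ y @ [z])) (bracket_expansion v)"
    have "right_normed w = ad_word u (right_normed (z # v))"
      using w by (simp add: ad_word_right_normed)
    also have "right_normed (z # v) = - lie_br (right_normed v) (lie_gen z)"
      using False by (simp add: right_normed_Cons lie_br_anticomm[of "lie_gen z"])
    also have "lie_br (right_normed v) (lie_gen z) =
        sum_list (map (\<lambda>(s, y). signed s (right_normed (y @ [z]))) (bracket_expansion v))"
      using ad_word_right_normed[of "[z]"] by (simp add: lie_br_right_normed)
    finally have "right_normed w = signed_sum L"
      by (simp add: L_def signed_sum_def ad_word_uminus ad_word_signed ad_word_sum_list
          ad_word_right_normed o_def case_prod_beta uminus_sum_list_map)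
    moreover have "\<forall>(s, x) \<in> set L. mset x = mset w \<and> last x = z"
      using w by (auto simp: L_def dest!: mset_bracket_expansion)
    ultimately show ?thesis by (rule that)
  qed
qed

lemma right_normed_normal_form:
  obtains L where "right_normed w = signed_sum L" and "\<forall>(s, x) \<in> set L. normal_word x"
proof (cases "distinct w \<and> w \<noteq> []")
  case False
  then show ?thesis using that[of "[]"] by (auto simp: right_normed_not_distinct)
next
  case True
  then have "pivot (set w) \<in> set w" unfolding pivot_def by (simp add: some_in_eq)
  then obtain L where L: "right_normed w = signed_sum L"
    and L_words: "\<forall>(s, x) \<in> set L. mset x = mset w \<and> last x = pivot (set w)"
    by (rule right_normed_ending_in)
  have "normal_word x" if "(s, x) \<in> set L" for s x
    using L_words that True unfolding normal_word_def
    by (metis (mono_tags, lifting) case_prodD mset_eq_imp_distinct_iff mset_eq_setD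
        mset_zero_iff)
  then show ?thesis using that[OF L] by blast
qed

lemma signed_sum_normal_form:
  obtains M where "signed_sum L = signed_sum M" and "\<forall>(s, x) \<in> set M. normal_word x"
proof (induction L arbitrary: thesis)
  case Nil show ?case by (rule Nil.prems[of "[]"]) simp_all
next
  case (Cons p L)
  obtain s w where p: "p = (s, w)" by fastforce
  obtain M1 where M1: "right_normed w = signed_sum M1" "\<forall>(s, x) \<in> set M1. normal_word x"
    by (rule right_normed_normal_form)
  obtain M2 where M2: "signed_sum L = signed_sum M2" "\<forall>(s, x) \<in> set M2. normal_word x"
    by (rule Cons.IH)
  show ?case
    by (rule Cons.prems[of "map (\<lambda>(t, x). (s = t, x)) M1 @ M2"])
      (use M1 M2 in \<open>auto simp: p signed_sum_append signed_signed_sum\<close>)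
qed

section \<open>Faithfulness of the action on the free Lie ring\<close>

lemma lie_eval_right_normed_normal:
  assumes u: "normal_word u" and x: "normal_word x"
  shows "lie_eval (right_normed x) u = (if u = x then 1 else 0)"
proof -
  obtain rest where expansion: "bracket_expansion x = (True, x) # rest"
    and rest_last: "\<forall>(s, y) \<in> set rest. last y \<noteq> last x"
    using x unfolding normal_word_def by (metis bracket_expansion_head)
  have "u \<noteq> y" if "(s, y) \<in> set rest" for s y
  proof
    assume "u = y"
    with that expansion have "set u = set x"
      by (metis list.set_intros(2) mset_bracket_expansion mset_eq_setD)
    then have "last u = last x" using u x unfolding normal_word_def by simp
    with \<open>u = y\<close> that rest_last show False by auto
  qed
  then have "lie_eval (right_normed x) u = (if distinct u \<and> u = x then 1 else 0)"
    by (auto simp: lie_eval_right_normed ring_act_lbr_list expansion sum_list_fun_apply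
        signed_apply ring_act_rprod_delta_Nil split_def intro!: sum_list_map_eq_zero)
  then show ?thesis using u unfolding normal_word_def by simp
qed

definition word_coeff :: "'a list \<Rightarrow> (bool \<times> 'a list) list \<Rightarrow> int" where
  "word_coeff u L = sum_list (map (\<lambda>(s, x). if x = u then signed s 1 else 0) L)"

lemma word_coeff_Nil [simp]: "word_coeff u [] = 0"
  by (simp add: word_coeff_def)

lemma word_coeff_Cons [simp]:
  "word_coeff u ((s, x) # L) = (if x = u then signed s 1 else 0) + word_coeff u L"
  by (simp add: word_coeff_def)

lemma lie_eval_signed_sum:
  assumes "normal_word u" and "\<forall>(s, x) \<in> set L. normal_word x"
  shows "lie_eval (signed_sum L) u = word_coeff u L"
  using assms(2)
  by (induction L)
    (auto simp: word_coeff_def signed_apply lie_eval_right_normed_normal[OF assms(1)]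
      signed_def)

lemma word_coeff_sign:
  assumes "(\<not> s, w) \<notin> set L"
  shows "signed s (1::int) * word_coeff w L \<ge> 0"
  using assms
proof (induction L)
  case (Cons p L) then show ?case by (cases p) (auto simp: signed_def distrib_left)
qed simp

text \<open>The first term has an opposite partner in the rest, since otherwise all occurrences of its
  word carry the same sign; remove both and recurse.\<close>

lemma signed_sum_eq_zero:
  assumes "\<forall>u. word_coeff u L = 0" shows "signed_sum L = 0"
  using assms
proof (induction "length L" arbitrary: L rule: less_induct)
  case less
  show ?case
  proof (cases L)
    case (Cons p L')
    obtain s w where p: "p = (s, w)" by fastforce
    have coeff_w: "signed s 1 + word_coeff w L' = 0"
      using less.prems[rule_format, of w] by (simp add: Cons p)
    have partner: "(\<not> s, w) \<in> set L'"
    proof (rule ccontr)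
      assume "(\<not> s, w) \<notin> set L'"
      then have "signed s (1::int) * word_coeff w L' \<ge> 0" by (rule word_coeff_sign)
      with coeff_w show False by (cases s) auto
    qed
    define L'' where "L'' = remove1 (\<not> s, w) L'"
    have coeff_remove1: "word_coeff u L' =
        (if w = u then signed (\<not> s) 1 else 0) + word_coeff u L''" for u
      unfolding word_coeff_def L''_def by (subst sum_list_map_remove1[OF partner]) simp
    have "\<forall>u. word_coeff u L'' = 0"
      using less.prems by (auto simp: Cons p coeff_remove1 split: if_splits)
    moreover have "length L'' < length L"
      using Cons partner by (simp add: L''_def length_remove1)
    ultimately have "signed_sum L'' = 0" using less.hyps by blast
    moreover have "signed_sum L' = signed (\<not> s) (right_normed w) + signed_sum L''"
      unfolding signed_sum_def L''_def by (subst sum_list_map_remove1[OF partner]) simp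
    ultimately show ?thesis by (simp add: Cons p)
  qed simp
qed

lemma inj_lie_eval: "inj lie_eval"
proof (rule inj_onI)
  fix X X' :: "'a RL"
  assume "lie_eval X = lie_eval X'"
  then have eval_zero: "lie_eval (X - X') = 0"
    by (simp only: diff_conv_add_uminus lie_eval_add lie_eval_uminus) simp
  obtain L where L: "X - X' = signed_sum L" using ex_signed_sum by blast
  obtain M where "signed_sum L = signed_sum M" and normal: "\<forall>(s, x) \<in> set M. normal_word x"
    by (rule signed_sum_normal_form)
  with L have M: "X - X' = signed_sum M" by simp
  have "word_coeff u M = 0" for u
  proof (cases "normal_word u")
    case True
    then show ?thesis using lie_eval_signed_sum[OF True normal] eval_zero M by simp
  next
    case False
    then have "\<forall>(s, x) \<in> set M. x \<noteq> u" using normal by auto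
    then show ?thesis unfolding word_coeff_def by (intro sum_list_map_eq_zero) auto
  qed
  then have "X - X' = 0" unfolding M by (intro signed_sum_eq_zero) simp
  then show "X = X'" by simp
qed

section \<open>Restriction to the letters of Y\<close>

fun lterm_restrict :: "'a set \<Rightarrow> 'a lterm \<Rightarrow> 'a lterm" where
  "lterm_restrict Y (LVar y) = (if y \<in> Y then LVar y else LZero)"
| "lterm_restrict Y LZero = LZero"
| "lterm_restrict Y (LAdd a b) = LAdd (lterm_restrict Y a) (lterm_restrict Y b)"
| "lterm_restrict Y (LNeg a) = LNeg (lterm_restrict Y a)"
| "lterm_restrict Y (LBr a b) = LBr (lterm_restrict Y a) (lterm_restrict Y b)"

lemma lterm_restrict_id: "lvars a \<subseteq> Y \<Longrightarrow> lterm_restrict Y a = a"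
  by (induction a) auto

lemma lvars_lbr_list: "lvars (lbr_list ys) = set ys"
  by (induction ys rule: lbr_list.induct) auto

declare l_trans [trans]

lemma lie_eq_zero_if_double:
  assumes "lie_eq Y t (LAdd t t)" shows "lie_eq Y t LZero"
proof -
  have "lie_eq Y LZero (LAdd t (LNeg t))" by (rule l_sym, rule l_add_neg)
  also have "lie_eq Y \<dots> (LAdd (LAdd t t) (LNeg t))" by (rule l_add_cong[OF assms l_refl])
  also have "lie_eq Y \<dots> (LAdd t (LAdd t (LNeg t)))" by (rule l_add_assoc)
  also have "lie_eq Y \<dots> (LAdd t LZero)" by (rule l_add_cong[OF l_refl l_add_neg])
  also have "lie_eq Y \<dots> t" by (rule l_add_zero)
  finally show ?thesis by (rule l_sym)
qed

lemma lie_eq_br_zero_right: "lie_eq Y (LBr x LZero) LZero"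
proof (rule lie_eq_zero_if_double)
  have "lie_eq Y (LBr x LZero) (LBr x (LAdd LZero LZero))"
    by (rule l_br_cong[OF l_refl l_sym[OF l_add_zero]])
  also have "lie_eq Y \<dots> (LAdd (LBr x LZero) (LBr x LZero))" by (rule l_br_addr)
  finally show "lie_eq Y (LBr x LZero) (LAdd (LBr x LZero) (LBr x LZero))" .
qed

lemma lie_eq_br_zero_left: "lie_eq Y (LBr LZero x) LZero"
proof (rule lie_eq_zero_if_double)
  have "lie_eq Y (LBr LZero x) (LBr (LAdd LZero LZero) x)"
    by (rule l_br_cong[OF l_sym[OF l_add_zero] l_refl])
  also have "lie_eq Y \<dots> (LAdd (LBr LZero x) (LBr LZero x))" by (rule l_br_addl)
  finally show "lie_eq Y (LBr LZero x) (LAdd (LBr LZero x) (LBr LZero x))" .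
qed

lemma lterm_restrict_lbr_list:
  "\<not> set ys \<subseteq> Y \<Longrightarrow> lie_eq Y (lterm_restrict Y (lbr_list ys)) LZero"
proof (induction ys rule: lbr_list.induct)
  case (3 a b v)
  show ?case
  proof (cases "a \<in> Y")
    case True
    then have "lie_eq Y (lterm_restrict Y (lbr_list (b # v))) LZero" using 3 by auto
    then have "lie_eq Y (LBr (LVar a) (lterm_restrict Y (lbr_list (b # v)))) (LBr (LVar a) LZero)"
      by (rule l_br_cong[OF l_refl])
    then show ?thesis using True by (simp add: l_trans[OF _ lie_eq_br_zero_right])
  next
    case False
    then show ?thesis by (simp add: lie_eq_br_zero_left)
  qed
qed (simp_all add: l_refl)

lemma lie_eq_restrict: "lie_eq Z a b \<Longrightarrow> lie_eq Y (lterm_restrict Y a) (lterm_restrict Y b)"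
proof (induction rule: lie_eq.induct)
  case (l_rel s ys)
  show ?case
  proof (cases "set ys \<subseteq> Y")
    case True
    with l_rel have "lie_eq Y (lbr_list ys) LZero"
      by (intro lie_eq.l_rel) (auto simp: Delta_def)
    then show ?thesis using True by (simp add: lterm_restrict_id lvars_lbr_list)
  qed (simp add: lterm_restrict_lbr_list)
next
  case (l_sym a b) then show ?case by (meson lie_eq.l_sym)
next
  case (l_trans a b c) then show ?case by (meson lie_eq.l_trans)
next
  case (l_add_cong a a' b b') then show ?case by (simp add: lie_eq.l_add_cong)
next
  case (l_neg_cong a a') then show ?case by (simp add: lie_eq.l_neg_cong)
next
  case (l_br_cong a a' b b') then show ?case by (simp add: lie_eq.l_br_cong)
qed (simp_all add: lie_eq.l_refl lie_eq.l_add_assoc lie_eq.l_add_comm lie_eq.l_add_zero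
  lie_eq.l_add_neg lie_eq.l_br_addl lie_eq.l_br_addr lie_eq.l_alt lie_eq.l_jacobi)

theorem proposition2p7:
  fixes Y :: "'a set" and a b :: "'a lterm"
  assumes "lvars a \<subseteq> Y" and "lvars b \<subseteq> Y"
    and "ring_eq Y (lie_to_ring a) (lie_to_ring b)"
  shows "lie_eq Y a b"
proof -
  have "ring_act (lie_to_ring a) = ring_act (lie_to_ring b)"
    using assms(3) by (rule ring_eq_imp_ring_act_eq)
  then have "lie_eval (abs_RL a) = lie_eval (abs_RL b)"
    by (simp add: lie_eval.abs_eq)
  then have "abs_RL a = abs_RL b"
    by (rule injD[OF inj_lie_eval])
  then have "lie_eq UNIV a b"
    by (simp add: RL.abs_eq_iff)
  then have "lie_eq Y (lterm_restrict Y a) (lterm_restrict Y b)"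
    by (rule lie_eq_restrict)
  then show ?thesis
    using assms(1,2) by (simp add: lterm_restrict_id)
qed

end
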